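(* Let $n\geq 2$, $1\leq k\leq n-1$ and $w\in\mathfrak{S}_n$. The subsequence of $w$ formed by all its $k$-peaks and $k$-valleys (in the order they appear in $w$) is a longest $k$-zigzagging subsequence of $w$; i.e., $zs_k(w)$ equals the number of $k$-peaks plus the number of $k$-valleys of $w$. Consequently, $E_n(zs_k)$ is two times the average number of $k$-peaks of a permutation in $\mathfrak{S}_n$, i.e. $E_n(zs_k)=\frac{2}{n!}\sum_{w\in\mathfrak{S}_n}\#\{k\text{-peaks of }w\}$.
   Context: $\mathfrak{S}_n$ is the set of permutations $w=w_1\cdots w_n$ of $\{1,\dots,n\}$. A section of $w$ is a consecutive block $w_s\cdots w_t$ ($s\le t$). A section $w_s\cdots w_t$ is a $k$-up if $s<t$ and $w_t-w_s\geq k$, and a $k$-down if $s<t$ and $w_s-w_t\geq k$; a $k$-up/$k$-down "in" $w_a\cdots w_b$ means one $w_s\cdots w_t$ with $a\le s<t\le b$. A section $w_i\cdots w_j$ ($i<j$) is $k$-ascending if $w_i=\min\{w_i,\dots,w_j\}$, $w_j=\max\{w_i,\dots,w_j\}$, $w_j-w_i\geq k$, and there is no $k$-down in it; it is $k$-descending if $w_i=\max$, $w_j=\min$ of $\{w_i,\dots,w_j\}$, $w_i-w_j\geq k$, and there is no $k$-up in it. Such a section is maximal if not contained in another section of the same type. If $w_i\cdots w_j$ is maximal $k$-ascending, $w_i$ is a $k$-valley and $w_j$ a $k$-peak of $w$; if it is maximal $k$-descending, $w_i$ is a $k$-peak and $w_j$ a $k$-valley of $w$. A subsequence $w_{i_1}\cdots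 w_{i_s}$ ($i_1<\dots<i_s$) is zigzagging if $w_{i_1}>w_{i_2}<w_{i_3}>\cdots$ or $w_{i_1}<w_{i_2}>w_{i_3}<\cdots$, and $k$-zigzagging if moreover $|w_{i_j}-w_{i_{j+1}}|\geq k$ for all $j$. $zs_k(w)$ is the maximal length of a $k$-zigzagging subsequence of $w$, and $E_n(zs_k)=\frac1{n!}\sum_{w\in\mathfrak{S}_n}zs_k(w)$. *)

theory Defs
  imports Complex_Main "HOL-Combinatorics.Multiset_Permutations" "HOL-Library.Sublist"
begin

text \<open>Permutations of {1..n} are lists w with w ! 0, ..., w ! (n-1) (0-based positions).
  Values are compared as integers to avoid truncated subtraction.\<close>

definition k_up :: "nat \<Rightarrow> nat list \<Rightarrow> nat \<Rightarrow> nat \<Rightarrow> bool" where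
  "k_up k w s t \<longleftrightarrow> s < t \<and> t < length w \<and> int (w ! t) - int (w ! s) \<ge> int k"

definition k_down :: "nat \<Rightarrow> nat list \<Rightarrow> nat \<Rightarrow> nat \<Rightarrow> bool" where
  "k_down k w s t \<longleftrightarrow> s < t \<and> t < length w \<and> int (w ! s) - int (w ! t) \<ge> int k"

definition k_ascending :: "nat \<Rightarrow> nat list \<Rightarrow> nat \<Rightarrow> nat \<Rightarrow> bool" where
  "k_ascending k w i j \<longleftrightarrow> i < j \<and> j < length w \<and>
     w ! i = Min ((!) w ` {i..j}) \<and> w ! j = Max ((!) w ` {i..j}) \<and>
     int (w ! j) - int (w ! i) \<ge> int k \<and>
     \<not> (\<exists>s t. i \<le> s \<and> s < t \<and> t \<le> j \<and> k_down k w s t)"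

definition k_descending :: "nat \<Rightarrow> nat list \<Rightarrow> nat \<Rightarrow> nat \<Rightarrow> bool" where
  "k_descending k w i j \<longleftrightarrow> i < j \<and> j < length w \<and>
     w ! i = Max ((!) w ` {i..j}) \<and> w ! j = Min ((!) w ` {i..j}) \<and>
     int (w ! i) - int (w ! j) \<ge> int k \<and>
     \<not> (\<exists>s t. i \<le> s \<and> s < t \<and> t \<le> j \<and> k_up k w s t)"

definition max_k_ascending :: "nat \<Rightarrow> nat list \<Rightarrow> nat \<Rightarrow> nat \<Rightarrow> bool" where
  "max_k_ascending k w i j \<longleftrightarrow> k_ascending k w i j \<and>
     \<not> (\<exists>i' j'. i' \<le> i \<and> j \<le> j' \<and> (i', j') \<noteq> (i, j) \<and> k_ascending k w i' j')"

definition max_k_descending :: "nat \<Rightarrow> nat list \<Rightarrow> nat \<Rightarrow> nat \<Rightarrow> bool" where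
  "max_k_descending k w i j \<longleftrightarrow> k_descending k w i j \<and>
     \<not> (\<exists>i' j'. i' \<le> i \<and> j \<le> j' \<and> (i', j') \<noteq> (i, j) \<and> k_descending k w i' j')"

definition k_peaks :: "nat \<Rightarrow> nat list \<Rightarrow> nat set" where
  "k_peaks k w = {p. (\<exists>i. max_k_ascending k w i p) \<or> (\<exists>j. max_k_descending k w p j)}"

definition k_valleys :: "nat \<Rightarrow> nat list \<Rightarrow> nat set" where
  "k_valleys k w = {p. (\<exists>j. max_k_ascending k w p j) \<or> (\<exists>i. max_k_descending k w i p)}"

definition zigzagging :: "nat list \<Rightarrow> bool" where
  "zigzagging xs \<longleftrightarrow>
     (\<forall>j. Suc j < length xs \<longrightarrow> (if even j then xs ! j > xs ! Suc j else xs ! j < xs ! Suc j)) \<or>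
     (\<forall>j. Suc j < length xs \<longrightarrow> (if even j then xs ! j < xs ! Suc j else xs ! j > xs ! Suc j))"

definition k_zigzagging :: "nat \<Rightarrow> nat list \<Rightarrow> bool" where
  "k_zigzagging k xs \<longleftrightarrow> zigzagging xs \<and>
     (\<forall>j. Suc j < length xs \<longrightarrow> \<bar>int (xs ! j) - int (xs ! Suc j)\<bar> \<ge> int k)"

definition zs :: "nat \<Rightarrow> nat list \<Rightarrow> nat" where
  "zs k w = Max {length ys | ys. subseq ys w \<and> k_zigzagging k ys}"

definition E_zs :: "nat \<Rightarrow> nat \<Rightarrow> real" where
  "E_zs n k = (\<Sum>w\<in>permutations_of_set {1..n}. real (zs k w)) / fact n"

end

theory Submission
  imports Defs
begin

text \<open>
  Every k-peak and k-valley is an end of a maximal k-ascending or k-descending section, and no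
  k-peak or k-valley lies strictly inside such a section. Scanning w from left to right, k-valleys
  and k-peaks therefore alternate, each k-valley followed by a k-peak at least k higher and vice
  versa, so together they form a k-zigzagging subsequence. Conversely, in any k-zigzagging
  subsequence w(q_0) w(q_1) ... every entry w(q_t) that is smaller (larger) than its neighbours
  forces a k-valley (k-peak) of w strictly between q_(t-1) and q_(t+1); the extrema obtained this
  way are pairwise distinct, so no k-zigzagging subsequence is longer. Finally the complementation
  w_i \<mapsto> n + 1 - w_i is an involution of the permutations of {1..n} exchanging k-peaks and
  k-valleys, so both occur equally often on average.
\<close>

lemma k_ascending_iff:
  "k_ascending k w i j \<longleftrightarrow> i < j \<and> j < length w
     \<and> (\<forall>t. i \<le> t \<and> t \<le> j \<longrightarrow> w!i \<le> w!t \<and> w!t \<le> w!j) \<and> w!i + k \<le> w!j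
     \<and> (\<forall>s t. i \<le> s \<and> s < t \<and> t \<le> j \<longrightarrow> w!s < w!t + k)"
proof (cases "i < j")
  case True
  have "w!i = Min ((!) w ` {i..j}) \<longleftrightarrow> (\<forall>t. i \<le> t \<and> t \<le> j \<longrightarrow> w!i \<le> w!t)"
    using True by (subst eq_commute, subst Min_eq_iff) auto
  moreover have "w!j = Max ((!) w ` {i..j}) \<longleftrightarrow> (\<forall>t. i \<le> t \<and> t \<le> j \<longrightarrow> w!t \<le> w!j)"
    using True by (subst eq_commute, subst Max_eq_iff) auto
  moreover have "(\<exists>s t. i \<le> s \<and> s < t \<and> t \<le> j \<and> k_down k w s t)
      \<longleftrightarrow> \<not> (\<forall>s t. i \<le> s \<and> s < t \<and> t \<le> j \<longrightarrow> w!s < w!t + k)" if "j < length w"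
  proof -
    have "k_down k w s t \<longleftrightarrow> s < t \<and> t < length w \<and> \<not> w!s < w!t + k" for s t
      unfolding k_down_def by auto
    then show ?thesis using that by (meson le_less_trans)
  qed
  ultimately show ?thesis unfolding k_ascending_def by auto
qed (auto simp: k_ascending_def)

lemma k_descending_iff:
  "k_descending k w i j \<longleftrightarrow> i < j \<and> j < length w
     \<and> (\<forall>t. i \<le> t \<and> t \<le> j \<longrightarrow> w!j \<le> w!t \<and> w!t \<le> w!i) \<and> w!j + k \<le> w!i
     \<and> (\<forall>s t. i \<le> s \<and> s < t \<and> t \<le> j \<longrightarrow> w!t < w!s + k)"
proof (cases "i < j")
  case True
  have "w!j = Min ((!) w ` {i..j}) \<longleftrightarrow> (\<forall>t. i \<le> t \<and> t \<le> j \<longrightarrow> w!j \<le> w!t)"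
    using True by (subst eq_commute, subst Min_eq_iff) auto
  moreover have "w!i = Max ((!) w ` {i..j}) \<longleftrightarrow> (\<forall>t. i \<le> t \<and> t \<le> j \<longrightarrow> w!t \<le> w!i)"
    using True by (subst eq_commute, subst Max_eq_iff) auto
  moreover have "(\<exists>s t. i \<le> s \<and> s < t \<and> t \<le> j \<and> k_up k w s t)
      \<longleftrightarrow> \<not> (\<forall>s t. i \<le> s \<and> s < t \<and> t \<le> j \<longrightarrow> w!t < w!s + k)" if "j < length w"
  proof -
    have "k_up k w s t \<longleftrightarrow> s < t \<and> t < length w \<and> \<not> w!t < w!s + k" for s t
      unfolding k_up_def by auto
    then show ?thesis using that by (meson le_less_trans)
  qed
  ultimately show ?thesis unfolding k_descending_def by auto
qed (auto simp: k_descending_def)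

lemma k_ascendingD:
  assumes "k_ascending k w i j"
  shows "i < j" "j < length w" "w!i + k \<le> w!j"
    "\<And>t. i \<le> t \<Longrightarrow> t \<le> j \<Longrightarrow> w!i \<le> w!t" "\<And>t. i \<le> t \<Longrightarrow> t \<le> j \<Longrightarrow> w!t \<le> w!j"
    "\<And>s t. i \<le> s \<Longrightarrow> s < t \<Longrightarrow> t \<le> j \<Longrightarrow> w!s < w!t + k"
  using assms unfolding k_ascending_iff by auto

lemma k_descendingD:
  assumes "k_descending k w i j"
  shows "i < j" "j < length w" "w!j + k \<le> w!i"
    "\<And>t. i \<le> t \<Longrightarrow> t \<le> j \<Longrightarrow> w!j \<le> w!t" "\<And>t. i \<le> t \<Longrightarrow> t \<le> j \<Longrightarrow> w!t \<le> w!i"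
    "\<And>s t. i \<le> s \<Longrightarrow> s < t \<Longrightarrow> t \<le> j \<Longrightarrow> w!t < w!s + k"
  using assms unfolding k_descending_iff by auto

lemma k_ascendingI:
  assumes "i < j" "j < length w" "w!i + k \<le> w!j"
    "\<And>t. i \<le> t \<Longrightarrow> t \<le> j \<Longrightarrow> w!i \<le> w!t" "\<And>t. i \<le> t \<Longrightarrow> t \<le> j \<Longrightarrow> w!t \<le> w!j"
    "\<And>s t. i \<le> s \<Longrightarrow> s < t \<Longrightarrow> t \<le> j \<Longrightarrow> w!s < w!t + k"
  shows "k_ascending k w i j"
  using assms unfolding k_ascending_iff by auto

lemma k_descendingI:
  assumes "i < j" "j < length w" "w!j + k \<le> w!i"
    "\<And>t. i \<le> t \<Longrightarrow> t \<le> j \<Longrightarrow> w!j \<le> w!t" "\<And>t. i \<le> t \<Longrightarrow> t \<le> j \<Longrightarrow> w!t \<le> w!i"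
    "\<And>s t. i \<le> s \<Longrightarrow> s < t \<Longrightarrow> t \<le> j \<Longrightarrow> w!t < w!s + k"
  shows "k_descending k w i j"
  using assms unfolding k_descending_iff by auto

lemma max_k_ascendingD: "max_k_ascending k w i j \<Longrightarrow> k_ascending k w i j"
  unfolding max_k_ascending_def by simp

lemma max_k_descendingD: "max_k_descending k w i j \<Longrightarrow> k_descending k w i j"
  unfolding max_k_descending_def by simp

lemma finite_has_arg_max:
  fixes f :: "'a \<Rightarrow> 'b::linorder"
  assumes "finite S" "S \<noteq> {}"
  shows "\<exists>x\<in>S. \<forall>y\<in>S. f y \<le> f x"
proof -
  have "Max (f ` S) \<in> f ` S" using assms by simp
  then obtain x where "x \<in> S" "f x = Max (f ` S)" by auto
  then show ?thesis using assms by (metis Max_ge finite_imageI image_eqI)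
qed

lemma finite_has_arg_min:
  fixes f :: "'a \<Rightarrow> 'b::linorder"
  assumes "finite S" "S \<noteq> {}"
  shows "\<exists>x\<in>S. \<forall>y\<in>S. f x \<le> f y"
proof -
  have "Min (f ` S) \<in> f ` S" using assms by simp
  then obtain x where "x \<in> S" "f x = Min (f ` S)" by auto
  then show ?thesis using assms by (metis Min_le finite_imageI image_eqI)
qed

lemma k_ascending_merge:
  assumes a1: "k_ascending k w i j" and a2: "k_ascending k w i' j'"
    and o: "i \<le> i'" "i' \<le> j" "j \<le> j'"
  shows "k_ascending k w i j'"
proof (rule k_ascendingI)
  note A = k_ascendingD[OF a1] and B = k_ascendingD[OF a2]
  show "i < j'" using A(1) o by simp
  show "j' < length w" using B(2) .
  have ij: "w!j \<le> w!j'" using B(5)[of j] o by simp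
  have ii: "w!i \<le> w!i'" using A(4)[of i'] o by simp
  show "w!i + k \<le> w!j'" using A(3) ij by simp
  fix t
  assume t: "i \<le> t" "t \<le> j'"
  show "w!i \<le> w!t"
  proof (cases "t \<le> j")
    case True then show ?thesis using A(4) t by simp
  next
    case False then show ?thesis using B(4)[of t] t o ii by simp
  qed
  show "w!t \<le> w!j'"
  proof (cases "t \<le> j")
    case True then show ?thesis using A(5)[of t] t ij by simp
  next
    case False then show ?thesis using B(5)[of t] t o by simp
  qed
next
  note A = k_ascendingD[OF a1] and B = k_ascendingD[OF a2]
  fix s t assume st: "i \<le> s" "s < t" "t \<le> j'"
  show "w!s < w!t + k"
  proof (cases "t \<le> j")
    case True then show ?thesis using A(6) st by simp
  next
    case tj: False
    show ?thesis
    proof (cases "i' \<le> s")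
      case True then show ?thesis using B(6) st by simp
    next
      case False
      then have "w!s \<le> w!j" using A(5)[of s] st o by simp
      moreover have "w!j < w!t + k" using B(6)[of j t] tj st o by simp
      ultimately show ?thesis by simp
    qed
  qed
qed

lemma k_ascending_extend_max:
  assumes "k_ascending k w i j"
  shows "\<exists>i' j'. i' \<le> i \<and> j \<le> j' \<and> max_k_ascending k w i' j'"
proof -
  define S where "S = {(a,b). a \<le> i \<and> j \<le> b \<and> k_ascending k w a b}"
  have "S \<subseteq> {..i} \<times> {..<length w}" unfolding S_def using k_ascendingD(2) by fastforce
  then have fin: "finite S" by (rule finite_subset) simp
  have ne: "(i,j) \<in> S" unfolding S_def using assms by simp
  obtain x where x: "x \<in> S" "\<forall>y\<in>S. (\<lambda>(a,b). b - a) y \<le> (\<lambda>(a,b). b - a) x"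
    using finite_has_arg_max[OF fin, of "\<lambda>(a,b). b - a"] ne by blast
  obtain a b where ab: "x = (a,b)" by force
  have xS: "a \<le> i" "j \<le> b" "k_ascending k w a b" using x(1) ab unfolding S_def by auto
  have "max_k_ascending k w a b"
    unfolding max_k_ascending_def
  proof (intro conjI notI)
    show "k_ascending k w a b" by fact
    assume "\<exists>i' j'. i' \<le> a \<and> b \<le> j' \<and> (i', j') \<noteq> (a, b) \<and> k_ascending k w i' j'"
    then obtain i' j' where h: "i' \<le> a" "b \<le> j'" "(i', j') \<noteq> (a, b)" "k_ascending k w i' j'" by blast
    then have "(i',j') \<in> S" using xS unfolding S_def by auto
    then have "j' - i' \<le> b - a" using x(2) ab by fastforce
    moreover have "a < b" using k_ascendingD(1)[OF xS(3)] .
    ultimately show False using h by auto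
  qed
  then show ?thesis using xS by blast
qed

lemma max_k_ascending_unique:
  assumes m1: "max_k_ascending k w i j" and m2: "max_k_ascending k w i' j'"
    and p: "i \<le> p" "p \<le> j" "i' \<le> p" "p \<le> j'"
  shows "i = i' \<and> j = j'"
proof -
  have key: "i = i' \<and> j = j'"
    if m1: "max_k_ascending k w i j" and m2: "max_k_ascending k w i' j'" and o: "i \<le> i'" "i' \<le> j"
    for i j i' j'
  proof (cases "j \<le> j'")
    case True
    have a: "k_ascending k w i j'"
      using k_ascending_merge[of k w i j i' j'] m1 m2 o True unfolding max_k_ascending_def by blast
    have "j' = j" using m1 a True unfolding max_k_ascending_def by blast
    then show ?thesis using m2 o m1 unfolding max_k_ascending_def by blast
  next
    case False
    have "k_ascending k w i j" using m1 unfolding max_k_ascending_def by blast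
    moreover have "\<not> (i \<le> i' \<and> j' \<le> j \<and> (i,j) \<noteq> (i',j') \<and> k_ascending k w i j)"
      using m2 unfolding max_k_ascending_def by blast
    ultimately have "(i, j) = (i', j')" using o False by auto
    then show ?thesis by simp
  qed
  show ?thesis
  proof (cases "i \<le> i'")
    case True then show ?thesis using key[OF m1 m2] p by simp
  next
    case False then show ?thesis using key[OF m2 m1] p by simp
  qed
qed

lemma k_ascendingI_near_max:
  assumes "i < j" "j < length w" "w!i + k \<le> w!j"
    and "\<And>t. i \<le> t \<Longrightarrow> t \<le> j \<Longrightarrow> w!i \<le> w!t \<and> w!t \<le> w!j"
    and "\<And>t. i < t \<Longrightarrow> t \<le> j \<Longrightarrow> w!j < w!t + k"
  shows "k_ascending k w i j"
proof (rule k_ascendingI)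
  fix s t assume "i \<le> s" "s < t" "t \<le> j"
  then show "w!s < w!t + k" using assms(4)[of s] assms(5)[of t] by force
qed (use assms in auto)

lemma k_ascendingI_near_min:
  assumes "i < j" "j < length w" "w!i + k \<le> w!j"
    and "\<And>t. i \<le> t \<Longrightarrow> t \<le> j \<Longrightarrow> w!i \<le> w!t \<and> w!t \<le> w!j"
    and "\<And>t. i \<le> t \<Longrightarrow> t < j \<Longrightarrow> w!t < w!i + k"
  shows "k_ascending k w i j"
proof (rule k_ascendingI)
  fix s t assume "i \<le> s" "s < t" "t \<le> j"
  then show "w!s < w!t + k" using assms(4)[of t] assms(5)[of s] by force
qed (use assms in auto)

text \<open>Reflecting the values turns k-peaks into k-valleys and back; every statement about
  k-peaks below is obtained from its k-valley dual this way.\<close>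

definition complement :: "nat \<Rightarrow> nat list \<Rightarrow> nat list" where
  "complement M w = map (\<lambda>x. M - x) w"

lemma length_complement [simp]: "length (complement M w) = length w"
  unfolding complement_def by simp

lemma nth_complement [simp]: "t < length w \<Longrightarrow> complement M w ! t = M - w!t"
  unfolding complement_def by simp

lemma complement_bounded: "\<forall>x\<in>set (complement M w). x \<le> M"
  unfolding complement_def by auto

lemma complement_complement:
  assumes "\<forall>x\<in>set w. x \<le> M"
  shows "complement M (complement M w) = w"
  unfolding complement_def using assms by (induction w) auto

lemma distinct_complement:
  assumes "\<forall>x\<in>set w. x \<le> M" and "distinct w"
  shows "distinct (complement M w)"
  unfolding complement_def using assms
  by (auto simp: distinct_map inj_on_def) (metis diff_diff_cancel)

lemma k_ascending_complement:
  assumes "\<forall>x\<in>set w. x \<le> M"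
  shows "k_ascending k (complement M w) i j \<longleftrightarrow> k_descending k w i j"
proof (cases "j < length w")
  case True
  then have c: "complement M w ! t = M - w!t" and le: "w!t \<le> M" if "t \<le> j" for t
    using assms that by auto
  have "(M - w!a \<le> M - w!b \<longleftrightarrow> w!b \<le> w!a) \<and> (M - w!a + k \<le> M - w!b \<longleftrightarrow> w!b + k \<le> w!a)
      \<and> (M - w!a < M - w!b + k \<longleftrightarrow> w!b < w!a + k)" if "a \<le> j" "b \<le> j" for a b
    using le[OF that(1)] le[OF that(2)] by linarith
  with c show ?thesis unfolding k_ascending_iff k_descending_iff length_complement
    by (smt (verit) le_trans less_imp_le_nat order_refl)
qed (simp add: k_ascending_iff k_descending_iff)

lemma k_descending_complement:
  assumes "\<forall>x\<in>set w. x \<le> M"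
  shows "k_descending k (complement M w) i j \<longleftrightarrow> k_ascending k w i j"
  using k_ascending_complement[of "complement M w" M k i j, OF complement_bounded]
    complement_complement[OF assms]
  by simp

lemma max_k_ascending_complement:
  assumes "\<forall>x\<in>set w. x \<le> M"
  shows "max_k_ascending k (complement M w) i j \<longleftrightarrow> max_k_descending k w i j"
  unfolding max_k_ascending_def max_k_descending_def k_ascending_complement[OF assms] ..

lemma max_k_descending_complement:
  assumes "\<forall>x\<in>set w. x \<le> M"
  shows "max_k_descending k (complement M w) i j \<longleftrightarrow> max_k_ascending k w i j"
  unfolding max_k_ascending_def max_k_descending_def k_descending_complement[OF assms] ..

lemma k_peaks_complement:
  assumes "\<forall>x\<in>set w. x \<le> M"
  shows "k_peaks k (complement M w) = k_valleys k w"
  unfolding k_peaks_def k_valleys_def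
    max_k_ascending_complement[OF assms] max_k_descending_complement[OF assms] by auto

lemma k_valleys_complement:
  assumes "\<forall>x\<in>set w. x \<le> M"
  shows "k_valleys k (complement M w) = k_peaks k w"
  unfolding k_peaks_def k_valleys_def
    max_k_ascending_complement[OF assms] max_k_descending_complement[OF assms] by auto

lemma k_extremumE:
  assumes "p \<in> k_peaks k w \<union> k_valleys k w"
  obtains i j where "max_k_ascending k w i j \<or> max_k_descending k w i j" and "p = i \<or> p = j"
  using assms unfolding k_peaks_def k_valleys_def by blast

lemma k_extremum_less_length: "p \<in> k_peaks k w \<union> k_valleys k w \<Longrightarrow> p < length w"
  by (elim k_extremumE)
    (metis k_ascendingD(1,2) k_descendingD(1,2) max_k_ascendingD max_k_descendingD order.strict_trans)

lemma no_k_extremum_inside_max_k_ascending: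
  assumes d: "distinct w" and m: "max_k_ascending k w u j" and inside: "u < p" "p < j"
    and p: "p \<in> k_peaks k w \<union> k_valleys k w"
  shows False
proof -
  note A = k_ascendingD[OF max_k_ascendingD[OF m]]
  have pl: "p < length w" using inside A(2) by simp
  obtain a b where run: "max_k_ascending k w a b \<or> max_k_descending k w a b" and ab: "p = a \<or> p = b"
    using p by (rule k_extremumE)
  show False
  proof (cases "max_k_ascending k w a b")
    case True
    have "a \<le> p" "p \<le> b" using k_ascendingD(1)[OF max_k_ascendingD[OF True]] ab by auto
    then show False using max_k_ascending_unique[OF m True, of p] inside ab by auto
  next
    case False
    with run have "max_k_descending k w a b" by simp
    note D = k_descendingD[OF max_k_descendingD[OF this]]
    from ab show False
    proof
      assume [simp]: "p = a"
      show False
      proof (cases "b \<le> j")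
        case True then show False using A(6)[of p b] D(1,3) inside by simp
      next
        case False
        then have "w!j = w!p" using D(5)[of j] A(5)[of p] inside by simp
        then show False using nth_eq_iff_index_eq[OF d pl A(2)] inside by simp
      qed
    next
      assume [simp]: "p = b"
      show False
      proof (cases "u \<le> a")
        case True then show False using A(6)[of a p] D(1,3) inside by simp
      next
        case False
        then have "w!u = w!p" using D(4)[of u] A(4)[of p] inside by simp
        moreover have "u < length w" using inside pl by simp
        ultimately show False using nth_eq_iff_index_eq[OF d _ pl, of u] inside by simp
      qed
    qed
  qed
qed

lemma k_extrema_complement:
  assumes "\<forall>x\<in>set w. x \<le> M"
  shows "k_peaks k (complement M w) \<union> k_valleys k (complement M w) = k_peaks k w \<union> k_valleys k w"
  using k_peaks_complement[OF assms] k_valleys_complement[OF assms] by blast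

lemma no_k_extremum_inside_max_k_descending:
  assumes "distinct w" and "max_k_descending k w u j" and "u < p" "p < j"
    and "p \<in> k_peaks k w \<union> k_valleys k w"
  shows False
proof -
  obtain M where M: "\<forall>x\<in>set w. x \<le> M" using member_le_sum_list by blast
  show False
    using no_k_extremum_inside_max_k_ascending[OF distinct_complement[OF M]] assms
      max_k_ascending_complement[OF M] k_extrema_complement[OF M] by blast
qed

lemma max_k_ascending_end_not_k_valley:
  assumes k: "0 < k" and m: "max_k_ascending k w i p"
  shows "p \<notin> k_valleys k w"
proof
  assume "p \<in> k_valleys k w"
  then consider j where "max_k_ascending k w p j" | i' where "max_k_descending k w i' p"
    unfolding k_valleys_def by blast
  then show False
  proof cases
    case (1 j)
    then show False
      using max_k_ascending_unique[OF m 1, of p] k_ascendingD(1)[OF max_k_ascendingD[OF 1]]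
        k_ascendingD(1)[OF max_k_ascendingD[OF m]] by simp
  next
    case (2 i')
    note A = k_ascendingD[OF max_k_ascendingD[OF m]] and D = k_descendingD[OF max_k_descendingD[OF 2]]
    show False
    proof (cases "i' \<le> i")
      case True then show False using D(4)[of i] A(1,3) k by simp
    next
      case False then show False using A(5)[of i'] D(1,3) k by simp
    qed
  qed
qed

lemma max_k_descending_end_not_k_peak:
  assumes "0 < k" and "max_k_descending k w i p"
  shows "p \<notin> k_peaks k w"
proof -
  obtain M where M: "\<forall>x\<in>set w. x \<le> M" using member_le_sum_list by blast
  show ?thesis
    using max_k_ascending_end_not_k_valley[of k "complement M w" i p] assms
    by (simp add: max_k_ascending_complement[OF M] k_valleys_complement[OF M])
qed

lemma not_max_k_ascending_and_max_k_descending_from: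
  assumes "0 < k" and "max_k_ascending k w p j" and "max_k_descending k w p j'"
  shows False
proof -
  note A = k_ascendingD[OF max_k_ascendingD[OF assms(2)]]
    and D = k_descendingD[OF max_k_descendingD[OF assms(3)]]
  show False
  proof (cases "j' \<le> j")
    case True then show False using A(4)[of j'] D(1,3) assms(1) by simp
  next
    case False then show False using D(5)[of j] A(1,3) assms(1) by simp
  qed
qed

lemma k_peaks_inter_k_valleys:
  assumes "0 < k"
  shows "k_peaks k w \<inter> k_valleys k w = {}"
proof (intro equals0I)
  fix p assume p: "p \<in> k_peaks k w \<inter> k_valleys k w"
  then consider i where "max_k_ascending k w i p" | j where "max_k_descending k w p j"
    unfolding k_peaks_def by blast
  then show False
  proof cases
    case (1 i)
    then show False using max_k_ascending_end_not_k_valley[OF assms] p by blast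
  next
    case (2 j)
    from p consider j' where "max_k_ascending k w p j'" | i' where "max_k_descending k w i' p"
      unfolding k_valleys_def by blast
    then show False
    proof cases
      case (1 j')
      show False using not_max_k_ascending_and_max_k_descending_from[OF assms 1 2] .
    next
      case (2 i')
      then show False using max_k_descending_end_not_k_peak[OF assms] p by blast
    qed
  qed
qed

lemma k_descending_extend_to_first_drop:
  assumes D: "k_descending k w i p" and s: "p < s" "s < length w" "w!s < w!p"
    and above: "\<And>r. p < r \<Longrightarrow> r < s \<Longrightarrow> w!p \<le> w!r"
    and near: "\<And>r. p < r \<Longrightarrow> r \<le> s \<Longrightarrow> w!r < w!p + k"
  shows "k_descending k w i s"
proof (rule k_descendingI)
  note D = k_descendingD[OF D]
  have low: "w!p \<le> w!a" if "i \<le> a" "a < s" for a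
    using D(4)[of a] above[of a] that by (cases "a \<le> p") auto
  show "i < s" "s < length w" "w!s + k \<le> w!i" using D(1,3) s by auto
  fix t assume t: "i \<le> t" "t \<le> s"
  show "w!s \<le> w!t" using low[of t] t s by (cases "t = s") auto
  show "w!t \<le> w!i" using D(5)[of t] near[of t] t D(3) by (cases "t \<le> p") auto
next
  note D = k_descendingD[OF D]
  fix a b assume ab: "i \<le> a" "a < b" "b \<le> s"
  show "w!b < w!a + k"
  proof (cases "b \<le> p")
    case True then show ?thesis using D(6) ab by simp
  next
    case False
    then have "w!b < w!p + k" using near[of b] ab by simp
    moreover have "w!p \<le> w!a" using D(4)[of a] above[of a] ab False by (cases "a \<le> p") auto
    ultimately show ?thesis by simp
  qed
qed

text \<open>Otherwise the section ending at p could be prolonged to the first later entry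
  below w!p.\<close>

lemma k_rise_before_drop_after_max_k_descending:
  assumes m: "max_k_descending k w i p" and s: "p < s" "s < length w" "w!s < w!p"
  shows "\<exists>r. p < r \<and> r < s \<and> w!p + k \<le> w!r"
proof (rule ccontr)
  assume no_rise: "\<not> (\<exists>r. p < r \<and> r < s \<and> w!p + k \<le> w!r)"
  obtain s0 where s0: "p < s0" "s0 \<le> s" "w!s0 < w!p"
    and first: "\<And>r. r < s0 \<Longrightarrow> \<not> (p < r \<and> r \<le> s \<and> w!r < w!p)"
    using exists_least_iff[of "\<lambda>r. p < r \<and> r \<le> s \<and> w!r < w!p"] s by blast
  have "k_descending k w i s0"
  proof (rule k_descending_extend_to_first_drop[OF max_k_descendingD[OF m] s0(1) _ s0(3)])
    show "s0 < length w" using s0 s by simp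
    show "w!p \<le> w!r" if "p < r" "r < s0" for r using first[of r] that s0 by auto
    show "w!r < w!p + k" if "p < r" "r \<le> s0" for r
    proof (cases "r = s0")
      case False
      then have "r < s" using that s0 by simp
      then show ?thesis using no_rise that by auto
    qed (use s0 in simp)
  qed
  moreover have "(i, s0) \<noteq> (i, p)" using s0(1) by simp
  ultimately show False using m s0(1) unfolding max_k_descending_def by (meson le_refl less_imp_le)
qed

lemma k_valley_starts_max_k_ascending:
  assumes d: "distinct w" and k: "0 < k" and v: "p \<in> k_valleys k w"
    and t: "p < t" "t < length w" "w!p + k \<le> w!t"
  shows "\<exists>j. max_k_ascending k w p j"
proof -
  from v consider j where "max_k_ascending k w p j" | i where "max_k_descending k w i p"
    unfolding k_valleys_def by blast
  then show ?thesis
  proof cases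
    case (2 i)
    obtain t0 where t0: "p < t0" "t0 < length w" "w!p + k \<le> w!t0"
      and first: "\<And>r. r < t0 \<Longrightarrow> \<not> (p < r \<and> r < length w \<and> w!p + k \<le> w!r)"
      using exists_least_iff[of "\<lambda>r. p < r \<and> r < length w \<and> w!p + k \<le> w!r"] t by blast
    have below: "w!r < w!p + k" if "p < r" "r < t0" for r
      using first[of r] that t0 by auto
    have above: "w!p \<le> w!r" if "p < r" "r < t0" for r
      using k_rise_before_drop_after_max_k_descending[OF 2, of r] below that t0
      by (metis not_le order.strict_trans)
    have "k_ascending k w p t0"
    proof (rule k_ascendingI_near_min[OF t0])
      show "w!p \<le> w!r \<and> w!r \<le> w!t0" if "p \<le> r" "r \<le> t0" for r
        using above[of r] below[of r] that t0 by (cases "r = p"; cases "r = t0") auto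
      show "w!r < w!p + k" if "p \<le> r" "r < t0" for r
        using below[of r] that t0 k by (cases "r = p") auto
    qed
    then obtain i' j' where ij: "i' \<le> p" "t0 \<le> j'" "max_k_ascending k w i' j'"
      using k_ascending_extend_max by blast
    have "\<not> i' < p"
    proof
      assume "i' < p"
      moreover have "p < j'" using ij(2) t0(1) by simp
      ultimately show False using no_k_extremum_inside_max_k_ascending[OF d ij(3)] v by blast
    qed
    then have "i' = p" using ij(1) by simp
    then show ?thesis using ij(3) by blast
  qed blast
qed

lemma k_valley_floor:
  assumes m: "max_k_descending k w i p" and no_rise: "\<forall>t. p < t \<and> t < length w \<longrightarrow> w!t < w!p + k"
    and s: "p < s" "s < length w"
  shows "w!p \<le> w!s"
proof (rule ccontr)
  assume "\<not> w!p \<le> w!s"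
  then obtain r where "p < r" "r < s" "w!p + k \<le> w!r"
    using k_rise_before_drop_after_max_k_descending[OF m s] by auto
  then show False using no_rise s by auto
qed

lemma no_k_extremum_after_last_k_valley:
  assumes d: "distinct w" and k: "0 < k" and v: "p \<in> k_valleys k w"
    and no_rise: "\<forall>t. p < t \<and> t < length w \<longrightarrow> w!t < w!p + k"
    and q: "q \<in> k_peaks k w \<union> k_valleys k w" "p < q"
  shows False
proof -
  have "\<not> max_k_ascending k w p j" for j
  proof
    assume "max_k_ascending k w p j"
    note A = k_ascendingD[OF max_k_ascendingD[OF this]]
    show False using no_rise A(1-3) by auto
  qed
  then obtain i where m: "max_k_descending k w i p" using v unfolding k_valleys_def by blast
  have band: "w!p \<le> w!s \<and> w!s < w!p + k" if "p \<le> s" "s < length w" for s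
    using k_valley_floor[OF m no_rise, of s] no_rise k that by (cases "p = s") auto
  obtain a b where run: "max_k_ascending k w a b \<or> max_k_descending k w a b" and ab: "q = a \<or> q = b"
    using q(1) by (rule k_extremumE)
  have span: "a < b \<and> b < length w \<and> (w!a + k \<le> w!b \<or> w!b + k \<le> w!a)"
  proof (cases "max_k_ascending k w a b")
    case True then show ?thesis using k_ascendingD(1-3)[OF max_k_ascendingD[OF True]] by simp
  next
    case False
    then have "max_k_descending k w a b" using run by simp
    then show ?thesis using k_descendingD(1-3)[OF max_k_descendingD] by simp
  qed
  show False
  proof (cases "p \<le> a")
    case True
    then show False using band[of a] band[of b] span by auto
  next
    case False
    then have inside: "a < p" "p < b" using ab q(2) span by auto
    have "p \<in> k_peaks k w \<union> k_valleys k w" using v by simp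
    then show False
      using run no_k_extremum_inside_max_k_ascending[OF d _ inside]
        no_k_extremum_inside_max_k_descending[OF d _ inside]
      by blast
  qed
qed

lemma next_k_extremum_after_k_valley:
  assumes d: "distinct w" and k: "0 < k" and v: "p \<in> k_valleys k w"
    and q: "q \<in> k_peaks k w \<union> k_valleys k w" "p < q"
    and between: "\<forall>r. p < r \<and> r < q \<longrightarrow> r \<notin> k_peaks k w \<union> k_valleys k w"
  shows "q \<in> k_peaks k w \<and> w!p + k \<le> w!q"
proof (cases "\<exists>t. p < t \<and> t < length w \<and> w!p + k \<le> w!t")
  case True
  then obtain j where j: "max_k_ascending k w p j"
    using k_valley_starts_max_k_ascending[OF d k v] by blast
  note A = k_ascendingD[OF max_k_ascendingD[OF j]]
  have jP: "j \<in> k_peaks k w" unfolding k_peaks_def using j by blast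
  have "q = j"
  proof (rule ccontr)
    assume "q \<noteq> j"
    then consider "q < j" | "j < q" by linarith
    then show False
    proof cases
      case 1
      show False using no_k_extremum_inside_max_k_ascending[OF d j q(2) 1 q(1)] .
    next
      case 2
      then show False using between jP A(1) by blast
    qed
  qed
  then show ?thesis using jP A(3) by simp
next
  case False
  then have "\<forall>t. p < t \<and> t < length w \<longrightarrow> w!t < w!p + k" by auto
  then show ?thesis using no_k_extremum_after_last_k_valley[OF d k v _ q] by blast
qed

lemma next_k_extremum_after_k_peak:
  assumes d: "distinct w" and k: "0 < k" and v: "p \<in> k_peaks k w"
    and q: "q \<in> k_peaks k w \<union> k_valleys k w" "p < q"
    and between: "\<forall>r. p < r \<and> r < q \<longrightarrow> r \<notin> k_peaks k w \<union> k_valleys k w"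
  shows "q \<in> k_valleys k w \<and> w!q + k \<le> w!p"
proof -
  obtain M where M: "\<forall>x\<in>set w. x \<le> M" using member_le_sum_list by blast
  let ?c = "complement M w"
  have "p \<in> k_valleys k ?c" using v k_valleys_complement[OF M] by simp
  then have "q \<in> k_peaks k ?c \<and> ?c!p + k \<le> ?c!q"
    using next_k_extremum_after_k_valley[OF distinct_complement[OF M d] k] q between
    unfolding k_extrema_complement[OF M] by blast
  moreover have "q < length w" using k_extremum_less_length[OF q(1)] .
  moreover have "w!p \<le> M" "w!q \<le> M" using M q(2) \<open>q < length w\<close> by auto
  ultimately show ?thesis using k_peaks_complement[OF M] q(2) by simp linarith
qed

lemma k_peak_between:
  assumes d: "distinct w" and k: "0 < k" and ab: "a < b" "b < R" "R \<le> length w"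
    and rise: "w!a + k \<le> w!b" and fall: "R < length w \<longrightarrow> w!R + k \<le> w!b"
  shows "\<exists>p\<in>k_peaks k w. a < p \<and> p < R"
proof -
  obtain x where x: "a \<le> x" "x < R" and top: "\<And>t. a \<le> t \<Longrightarrow> t < R \<Longrightarrow> w!t \<le> w!x"
    using finite_has_arg_max[of "{a..<R}" "\<lambda>t. w!t"] ab by auto
  define Y where "Y = {y. a \<le> y \<and> y \<le> x \<and> w!y + k \<le> w!x}"
  have "a \<in> Y" unfolding Y_def using x top[of b] rise ab by simp
  moreover have "finite Y" unfolding Y_def by simp
  ultimately have "Max Y \<in> Y" and last: "\<And>t. t \<in> Y \<Longrightarrow> t \<le> Max Y"
    by (auto intro: Max_in)
  then obtain y where y: "a \<le> y" "y \<le> x" "w!y + k \<le> w!x" and "y = Max Y" unfolding Y_def by auto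
  have yx: "y < x" using y k by (metis add_le_same_cancel1 le_neq_implies_less not_gr0 not_le)
  have near: "w!x < w!t + k" if "y < t" "t \<le> x" for t
    using last[of t] that y \<open>y = Max Y\<close> unfolding Y_def by fastforce
  have "k_ascending k w y x"
  proof (rule k_ascendingI_near_max[OF yx _ y(3) _ near])
    show "x < length w" using x ab by simp
    show "w!y \<le> w!t \<and> w!t \<le> w!x" if "y \<le> t" "t \<le> x" for t
      using near[of t] top[of t] that y x by (cases "t = y") auto
  qed
  then obtain i' j' where ij: "i' \<le> y" "x \<le> j'" "max_k_ascending k w i' j'"
    using k_ascending_extend_max by blast
  note A = k_ascendingD[OF max_k_ascendingD[OF ij(3)]]
  have "j' = x"
  proof (cases "j' < R")
    case True
    then have "w!j' = w!x" using top[of j'] A(5)[of x] ij y x by simp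
    then show ?thesis using nth_eq_iff_index_eq[OF d A(2)] x ab by simp
  next
    case False
    then have "w!R + k \<le> w!x" using fall A(2) top[of b] ab by simp
    moreover have "w!x < w!R + k" using A(6)[of x R] ij y yx x False by simp
    ultimately show ?thesis by simp
  qed
  then have "x \<in> k_peaks k w" using ij(3) unfolding k_peaks_def by blast
  moreover have "a < x" using yx y by simp
  ultimately show ?thesis using x by blast
qed

lemma k_valley_before_rise:
  assumes d: "distinct w" and k: "0 < k" and bc: "b < c" "c < length w"
    and rise: "w!b + k \<le> w!c"
  shows "\<exists>v\<in>k_valleys k w. v < c"
proof -
  obtain y where "y \<le> c" and bottom: "\<And>t. t \<le> c \<Longrightarrow> w!y \<le> w!t"
    using finite_has_arg_min[of "{..c}" "\<lambda>t. w!t"] by auto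
  have yc: "y < c" using \<open>y \<le> c\<close> bottom[of b] rise bc k by (cases "y = c") auto
  have "w!y + k \<le> w!c" using bottom[of b] rise bc by simp
  then obtain x where x: "y < x" "x \<le> c" "w!y + k \<le> w!x"
    and first: "\<And>t. t < x \<Longrightarrow> \<not> (y < t \<and> t \<le> c \<and> w!y + k \<le> w!t)"
    using exists_least_iff[of "\<lambda>t. y < t \<and> t \<le> c \<and> w!y + k \<le> w!t"] yc by blast
  have near: "w!t < w!y + k" if "y \<le> t" "t < x" for t
    using first[of t] that x k by (cases "t = y") auto
  have "k_ascending k w y x"
  proof (rule k_ascendingI_near_min[OF x(1) _ x(3) _ near])
    show "x < length w" using x bc by simp
    show "w!y \<le> w!t \<and> w!t \<le> w!x" if "y \<le> t" "t \<le> x" for t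
      using bottom[of t] near[of t] that x by (cases "t = x") auto
  qed
  then obtain i' j' where ij: "i' \<le> y" "x \<le> j'" "max_k_ascending k w i' j'"
    using k_ascending_extend_max by blast
  note A = k_ascendingD[OF max_k_ascendingD[OF ij(3)]]
  have "w!i' = w!y" using bottom[of i'] A(4)[of y] ij x yc by simp
  then have "i' = y" using nth_eq_iff_index_eq[OF d, of i' y] ij yc bc by simp
  then have "y \<in> k_valleys k w" using ij(3) unfolding k_valleys_def by blast
  then show ?thesis using yc by blast
qed

lemma k_peak_before_drop:
  assumes d: "distinct w" and k: "0 < k" and bc: "b < c" "c < length w"
    and drop: "w!c + k \<le> w!b"
  shows "\<exists>v\<in>k_peaks k w. v < c"
proof -
  obtain M where M: "\<forall>x\<in>set w. x \<le> M" using member_le_sum_list by blast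
  then have "w!b \<le> M" "w!c \<le> M" using bc by auto
  then have "complement M w ! b + k \<le> complement M w ! c" using drop bc by simp
  then show ?thesis
    using k_valley_before_rise[OF distinct_complement[OF M d] k, of b c] bc k_valleys_complement[OF M]
    by simp
qed

lemma k_valley_between:
  assumes d: "distinct w" and k: "0 < k" and ab: "a < b" "b < R" "R \<le> length w"
    and drop: "w!b + k \<le> w!a" and rise: "R < length w \<longrightarrow> w!b + k \<le> w!R"
  shows "\<exists>p\<in>k_valleys k w. a < p \<and> p < R"
proof -
  obtain M where M: "\<forall>x\<in>set w. x \<le> M" using member_le_sum_list by blast
  let ?c = "complement M w"
  have "w!b \<le> M" "w!a \<le> M" using M ab by auto
  then have "?c ! a + k \<le> ?c ! b" using drop ab by simp
  moreover have "R < length w \<longrightarrow> ?c ! R + k \<le> ?c ! b"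
    using rise M \<open>w!b \<le> M\<close> ab by auto
  ultimately show ?thesis
    using k_peak_between[OF distinct_complement[OF M d] k ab(1,2)] ab k_peaks_complement[OF M] by simp
qed

definition indices_in :: "nat set \<Rightarrow> nat \<Rightarrow> nat list" where
  "indices_in A L = filter (\<lambda>i. i \<in> A) [0..<L]"

lemma nths_eq_map_indices_in: "nths xs A = map ((!) xs) (indices_in A (length xs))"
proof (induction xs arbitrary: A)
  case Nil then show ?case by (simp add: indices_in_def)
next
  case (Cons x xs)
  have "[0..<Suc (length xs)] = 0 # map Suc [0..<length xs]"
    by (simp add: map_Suc_upt upt_conv_Cons del: upt_Suc)
  then have "indices_in A (length (x # xs))
      = (if 0 \<in> A then [0] else []) @ map Suc (indices_in {j. Suc j \<in> A} (length xs))"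
    unfolding indices_in_def by (simp add: filter_map o_def del: upt_Suc)
  then show ?case by (simp add: nths_Cons Cons o_def)
qed

lemma sorted_indices_in: "sorted_wrt (<) (indices_in A L)"
  unfolding indices_in_def by (simp add: sorted_wrt_filter)

lemma set_indices_in: "set (indices_in A L) = {i \<in> A. i < L}"
  unfolding indices_in_def by auto

lemma sorted_wrt_less_no_member_between:
  fixes xs :: "'a::linorder list"
  assumes s: "sorted_wrt (<) xs" and m: "Suc m < length xs" and r: "xs!m < r" "r < xs!Suc m"
  shows "r \<notin> set xs"
proof
  assume "r \<in> set xs"
  then obtain i where i: "i < length xs" "xs!i = r" by (auto simp: in_set_conv_nth)
  consider "i \<le> m" | "Suc m \<le> i" by linarith
  then show False
  proof cases
    case 1
    then have "xs!i \<le> xs!m" using sorted_wrt_nth_less[OF s, of i m] m by (cases "i = m") auto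
    then show False using i r by simp
  next
    case 2
    then have "xs!Suc m \<le> xs!i" using sorted_wrt_nth_less[OF s, of "Suc m" i] i by (cases "i = Suc m") auto
    then show False using i r by simp
  qed
qed

definition k_alternating :: "nat \<Rightarrow> bool \<Rightarrow> nat list \<Rightarrow> bool" where
  "k_alternating k up xs \<longleftrightarrow> (\<forall>j. Suc j < length xs \<longrightarrow>
     (if even j = up then xs!j + k \<le> xs!Suc j else xs!Suc j + k \<le> xs!j))"

lemma zigzagging_iff_alternating:
  "zigzagging xs \<longleftrightarrow> (\<exists>up. \<forall>j. Suc j < length xs \<longrightarrow>
     (if even j = up then xs!j < xs!Suc j else xs!Suc j < xs!j))"
  unfolding zigzagging_def
proof
  assume "(\<forall>j. Suc j < length xs \<longrightarrow> (if even j then xs!j > xs!Suc j else xs!j < xs!Suc j))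
        \<or> (\<forall>j. Suc j < length xs \<longrightarrow> (if even j then xs!j < xs!Suc j else xs!j > xs!Suc j))"
  then show "\<exists>up. \<forall>j. Suc j < length xs \<longrightarrow>
     (if even j = up then xs!j < xs!Suc j else xs!Suc j < xs!j)"
  proof
    assume "\<forall>j. Suc j < length xs \<longrightarrow> (if even j then xs!j > xs!Suc j else xs!j < xs!Suc j)"
    then have "\<forall>j. Suc j < length xs \<longrightarrow>
        (if even j = False then xs!j < xs!Suc j else xs!Suc j < xs!j)" by simp
    then show ?thesis by blast
  next
    assume "\<forall>j. Suc j < length xs \<longrightarrow> (if even j then xs!j < xs!Suc j else xs!j > xs!Suc j)"
    then have "\<forall>j. Suc j < length xs \<longrightarrow>
        (if even j = True then xs!j < xs!Suc j else xs!Suc j < xs!j)" by simp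
    then show ?thesis by blast
  qed
next
  assume "\<exists>up. \<forall>j. Suc j < length xs \<longrightarrow>
     (if even j = up then xs!j < xs!Suc j else xs!Suc j < xs!j)"
  then obtain up where "\<forall>j. Suc j < length xs \<longrightarrow>
     (if even j = up then xs!j < xs!Suc j else xs!Suc j < xs!j)" ..
  then show "(\<forall>j. Suc j < length xs \<longrightarrow> (if even j then xs!j > xs!Suc j else xs!j < xs!Suc j))
        \<or> (\<forall>j. Suc j < length xs \<longrightarrow> (if even j then xs!j < xs!Suc j else xs!j > xs!Suc j))"
    by (cases up) simp_all
qed

lemma k_zigzagging_iff_k_alternating:
  assumes "0 < k"
  shows "k_zigzagging k xs \<longleftrightarrow> (\<exists>up. k_alternating k up xs)"
proof -
  have step: "(if c then a + k \<le> b else b + k \<le> a)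
      \<longleftrightarrow> (if c then a < b else b < a) \<and> int k \<le> \<bar>int a - int b\<bar>" for c and a b :: nat
    using assms by auto
  have "k_alternating k up xs \<longleftrightarrow>
      (\<forall>j. Suc j < length xs \<longrightarrow> (if even j = up then xs!j < xs!Suc j else xs!Suc j < xs!j))
      \<and> (\<forall>j. Suc j < length xs \<longrightarrow> int k \<le> \<bar>int (xs!j) - int (xs!Suc j)\<bar>)" for up
    unfolding k_alternating_def step imp_conjR all_conj_distrib ..
  then show ?thesis unfolding k_zigzagging_def zigzagging_iff_alternating by blast
qed

lemma k_zigzagging_k_extrema:
  assumes d: "distinct w" and k: "0 < k"
  shows "k_zigzagging k (nths w (k_peaks k w \<union> k_valleys k w))"
proof -
  let ?P = "k_peaks k w" and ?V = "k_valleys k w"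
  define zl where "zl = indices_in (?P \<union> ?V) (length w)"
  have so: "sorted_wrt (<) zl" unfolding zl_def by (rule sorted_indices_in)
  have set_zl: "set zl = ?P \<union> ?V"
    unfolding zl_def set_indices_in using k_extremum_less_length by blast
  have in_zl: "zl!m \<in> ?P \<union> ?V" if "m < length zl" for m
    using that set_zl nth_mem by blast
  have step: "if zl!m \<in> ?V then zl!Suc m \<in> ?P \<and> w!(zl!m) + k \<le> w!(zl!Suc m)
              else zl!Suc m \<in> ?V \<and> w!(zl!Suc m) + k \<le> w!(zl!m)"
    if m: "Suc m < length zl" for m
  proof -
    have lt: "zl!m < zl!Suc m" using sorted_wrt_nth_less[OF so, of m "Suc m"] m by simp
    have between: "\<forall>r. zl!m < r \<and> r < zl!Suc m \<longrightarrow> r \<notin> ?P \<union> ?V"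
      using sorted_wrt_less_no_member_between[OF so m] set_zl by blast
    show ?thesis
      using next_k_extremum_after_k_valley[OF d k _ in_zl[OF m] lt between]
        next_k_extremum_after_k_peak[OF d k _ in_zl[OF m] lt between] in_zl[of m] m
      by auto
  qed
  have parity: "zl!m \<in> ?V \<longleftrightarrow> (zl!0 \<in> ?V \<longleftrightarrow> even m)" if "m < length zl" for m
    using that
  proof (induction m)
    case (Suc m)
    have "zl!Suc m \<in> ?V \<longleftrightarrow> zl!m \<notin> ?V"
      using step[OF Suc.prems] k_peaks_inter_k_valleys[OF k] by (auto split: if_splits)
    then show ?case using Suc by simp
  qed simp
  have "k_alternating k (zl!0 \<in> ?V) (map ((!) w) zl)"
    unfolding k_alternating_def
  proof (intro allI impI)
    fix j assume "Suc j < length (map ((!) w) zl)"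
    then have j: "Suc j < length zl" by simp
    then have "(even j = (zl!0 \<in> ?V)) = (zl!j \<in> ?V)" using parity[of j] by auto
    then show "if even j = (zl!0 \<in> ?V) then map ((!) w) zl ! j + k \<le> map ((!) w) zl ! Suc j
               else map ((!) w) zl ! Suc j + k \<le> map ((!) w) zl ! j"
      using step[OF j] j by (auto split: if_splits)
  qed
  then show ?thesis
    unfolding nths_eq_map_indices_in zl_def[symmetric] k_zigzagging_iff_k_alternating[OF k] by blast
qed

lemma finite_k_extrema: "finite (k_peaks k w \<union> k_valleys k w)"
  using k_extremum_less_length by (meson finite_lessThan finite_subset lessThan_iff subsetI)

lemma card_k_extrema:
  assumes "0 < k"
  shows "card (k_peaks k w \<union> k_valleys k w) = card (k_peaks k w) + card (k_valleys k w)"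
  using card_Un_disjoint k_peaks_inter_k_valleys[OF assms] finite_k_extrema by (metis finite_Un)

lemma length_nths_k_extrema:
  "length (nths w (k_peaks k w \<union> k_valleys k w)) = card (k_peaks k w \<union> k_valleys k w)"
proof -
  have "{i. i < length w \<and> i \<in> k_peaks k w \<union> k_valleys k w} = k_peaks k w \<union> k_valleys k w"
    using k_extremum_less_length by blast
  then show ?thesis unfolding length_nths by simp
qed

lemma k_extrema_nonempty:
  assumes d: "distinct w" and k: "0 < k"
    and rise: "a < length w" "b < length w" "w!a + k \<le> w!b"
  shows "k_peaks k w \<union> k_valleys k w \<noteq> {}"
proof -
  have "a \<noteq> b" using rise k by auto
  then consider "a < b" | "b < a" by linarith
  then show ?thesis
  proof cases
    case 1 then show ?thesis using k_valley_before_rise[OF d k 1 rise(2,3)] by blast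
  next
    case 2 then show ?thesis using k_peak_before_drop[OF d k 2 rise(1,3)] by blast
  qed
qed

lemma k_extremum_in_window:
  assumes d: "distinct w" and k: "0 < k" and so: "sorted_wrt (<) q" and q: "set q \<subseteq> {..<length w}"
    and alt: "k_alternating k up (map ((!) w) q)" and len: "2 \<le> length q" and t: "t < length q"
  shows "\<exists>p \<in> (if even t = up then k_valleys k w else k_peaks k w).
           (0 < t \<longrightarrow> q!(t - 1) < p) \<and> (Suc t < length q \<longrightarrow> p < q!Suc t)"
proof -
  have step: "if even s = up then w!(q!s) + k \<le> w!(q!Suc s) else w!(q!Suc s) + k \<le> w!(q!s)"
    if "Suc s < length q" for s
    using alt that unfolding k_alternating_def by auto
  have lt: "q!i < q!j" if "i < j" "j < length q" for i j
    using sorted_wrt_nth_less[OF so that] .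
  have in_w: "q!i < length w" if "i < length q" for i
    using q nth_mem[OF that] by auto
  show ?thesis
  proof (cases t)
    case 0
    have one: "Suc 0 < length q" using len by simp
    show ?thesis
    proof (cases up)
      case True
      then show ?thesis
        using step[OF one] k_valley_before_rise[OF d k lt[OF _ one] in_w[OF one]] 0 by auto
    next
      case False
      then show ?thesis
        using step[OF one] k_peak_before_drop[OF d k lt[OF _ one] in_w[OF one]] 0 by auto
    qed
  next
    case (Suc u)
    define R where "R = (if Suc t < length q then q!Suc t else length w)"
    have ut: "q!u < q!t" using lt[of u t] Suc t by simp
    have tR: "q!t < R" unfolding R_def using lt[of t "Suc t"] in_w[OF t] by auto
    have R: "R \<le> length w" unfolding R_def using in_w[of "Suc t"] by auto
    have "Suc u < length q" using Suc t by simp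
    note prev = step[OF this, folded Suc]
    show ?thesis
    proof (cases "even t = up")
      case True
      then have "w!(q!t) + k \<le> w!(q!u)" using prev Suc by auto
      moreover have "R < length w \<longrightarrow> w!(q!t) + k \<le> w!R"
        unfolding R_def using step[of t] True by auto
      ultimately obtain p where "p \<in> k_valleys k w" "q!u < p" "p < R"
        using k_valley_between[OF d k ut tR R] by blast
      then show ?thesis using True Suc R_def by auto
    next
      case False
      then have "w!(q!u) + k \<le> w!(q!t)" using prev Suc by auto
      moreover have "R < length w \<longrightarrow> w!R + k \<le> w!(q!t)"
        unfolding R_def using step[of t] False by auto
      ultimately obtain p where "p \<in> k_peaks k w" "q!u < p" "p < R"
        using k_peak_between[OF d k ut tR R] by blast
      then show ?thesis using False Suc R_def by auto
    qed
  qed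
qed

lemma k_zigzagging_length_le:
  assumes d: "distinct w" and k: "0 < k"
    and rise: "a < length w" "b < length w" "w!a + k \<le> w!b"
    and sub: "subseq ys w" and z: "k_zigzagging k ys"
  shows "length ys \<le> card (k_peaks k w \<union> k_valleys k w)"
proof -
  let ?P = "k_peaks k w" and ?V = "k_valleys k w"
  obtain N where N: "ys = nths w N" using sub subseq_conv_nths by blast
  define q where "q = indices_in N (length w)"
  have ys: "ys = map ((!) w) q" unfolding N q_def nths_eq_map_indices_in ..
  have so: "sorted_wrt (<) q" unfolding q_def by (rule sorted_indices_in)
  have q: "set q \<subseteq> {..<length w}" unfolding q_def set_indices_in by auto
  obtain up where alt: "k_alternating k up (map ((!) w) q)"
    using z k_zigzagging_iff_k_alternating[OF k] ys by blast
  show ?thesis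
  proof (cases "length q \<le> 1")
    case True
    \<comment> \<open>a single entry is k-zigzagging, which is why a k-rise in w is assumed\<close>
    have "card (?P \<union> ?V) \<noteq> 0"
      using k_extrema_nonempty[OF d k rise] finite_k_extrema by simp
    then show ?thesis using True ys by simp
  next
    case False
    then have len: "2 \<le> length q" by simp
    obtain f where f: "\<And>t. t < length q \<Longrightarrow> f t \<in> (if even t = up then ?V else ?P)
        \<and> (0 < t \<longrightarrow> q!(t - 1) < f t) \<and> (Suc t < length q \<longrightarrow> f t < q!Suc t)"
      using k_extremum_in_window[OF d k so q alt len] by metis
    have "f t \<noteq> f t'" if tt: "t < t'" "t' < length q" for t t'
    proof (cases "even t = even t'")
      case True
      then have "Suc t \<le> t' - 1" using tt by (cases "Suc t = t'") auto
      moreover have "t' - 1 < length q" using tt by simp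
      ultimately have "q!Suc t \<le> q!(t' - 1)"
        using sorted_wrt_nth_less[OF so, of "Suc t" "t' - 1"] by (cases "Suc t = t' - 1") auto
      then show ?thesis using f[of t] f[of t'] tt by auto
    next
      case False
      then show ?thesis
        using f[of t] f[of t'] tt k_peaks_inter_k_valleys[OF k, of w]
        by (auto simp: disjoint_iff split: if_splits)
    qed
    then have "inj_on f {..<length q}"
      by (metis inj_onI lessThan_iff linorder_neqE_nat)
    moreover have "f t \<in> ?P \<union> ?V" if "t < length q" for t
      using f[OF that] by (cases "even t = up") auto
    then have "f ` {..<length q} \<subseteq> ?P \<union> ?V" by auto
    ultimately have "card {..<length q} \<le> card (?P \<union> ?V)"
      using card_inj_on_le finite_k_extrema by blast
    then show ?thesis using ys by simp
  qed
qed

lemma zs_eq_card_k_extrema: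
  assumes d: "distinct w" and k: "0 < k"
    and rise: "a < length w" "b < length w" "w!a + k \<le> w!b"
  shows "zs k w = card (k_peaks k w \<union> k_valleys k w)"
  unfolding zs_def
proof (rule Max_eqI)
  let ?A = "k_peaks k w \<union> k_valleys k w"
  let ?Z = "{length ys |ys. subseq ys w \<and> k_zigzagging k ys}"
  have bound: "\<forall>l\<in>?Z. l \<le> card ?A"
    using k_zigzagging_length_le[OF d k rise] by blast
  then show "finite ?Z" by (meson finite_atMost atMost_iff finite_subset subsetI)
  show "l \<le> card ?A" if "l \<in> ?Z" for l using bound that by blast
  have "subseq (nths w ?A) w" using subseq_conv_nths by blast
  then show "card ?A \<in> ?Z"
    using k_zigzagging_k_extrema[OF d k] length_nths_k_extrema by (metis (mono_tags, lifting) mem_Collect_eq)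
qed

lemma permutation_has_k_rise:
  fixes n :: nat
  assumes w: "w \<in> permutations_of_set {1..n}" and "0 < n" and "k \<le> n - 1"
  shows "\<exists>a b. a < length w \<and> b < length w \<and> w!a + k \<le> w!b"
proof -
  have "1 \<in> set w" "n \<in> set w" using permutations_of_setD(1)[OF w] assms(2) by auto
  then obtain a b where "a < length w" "w!a = 1" "b < length w" "w!b = n"
    by (metis in_set_conv_nth)
  then show ?thesis using assms(2,3) by (intro exI[of _ a] exI[of _ b]) auto
qed

lemma complement_permutation:
  assumes w: "w \<in> permutations_of_set {1..n}"
  shows "complement (n + 1) w \<in> permutations_of_set {1..n}"
proof -
  have s: "set w = {1..n}" and d: "distinct w" using permutations_of_setD[OF w] by auto
  have "set (complement (n + 1) w) = (\<lambda>x. n + 1 - x) ` {1..n}"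
    unfolding complement_def s[symmetric] by simp
  also have "\<dots> = {1..n}"
  proof (intro equalityI subsetI)
    fix y assume "y \<in> {1..n}"
    then have "y = n + 1 - (n + 1 - y)" "n + 1 - y \<in> {1..n}" by auto
    then show "y \<in> (\<lambda>x. n + 1 - x) ` {1..n}" by blast
  qed auto
  finally show ?thesis using distinct_complement[of w "n + 1"] s d by auto
qed

lemma sum_card_k_valleys_eq_sum_card_k_peaks:
  "(\<Sum>w\<in>permutations_of_set {1..n}. card (k_valleys k w))
     = (\<Sum>w\<in>permutations_of_set {1..n}. card (k_peaks k w))"
proof -
  have involution: "complement (n + 1) (complement (n + 1) w) = w"
    and bounded: "\<forall>x\<in>set w. x \<le> n + 1" if "w \<in> permutations_of_set {1..n}" for w
    using complement_complement permutations_of_setD(1)[OF that] by auto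
  show ?thesis
  proof (rule sum.reindex_bij_witness[of _ "complement (n + 1)" "complement (n + 1)"])
    fix w assume w: "w \<in> permutations_of_set {1..n}"
    show "complement (n + 1) (complement (n + 1) w) = w" by (rule involution[OF w])
    show "complement (n + 1) w \<in> permutations_of_set {1..n}" by (rule complement_permutation[OF w])
    show "card (k_peaks k (complement (n + 1) w)) = card (k_valleys k w)"
      unfolding k_peaks_complement[OF bounded[OF w]] ..
  next
    fix w assume w: "w \<in> permutations_of_set {1..n}"
    show "complement (n + 1) (complement (n + 1) w) = w" by (rule involution[OF w])
    show "complement (n + 1) w \<in> permutations_of_set {1..n}" by (rule complement_permutation[OF w])
  qed
qed

theorem proposition2p8:
  fixes n k :: nat
  assumes "n \<ge> 2" and "1 \<le> k" and "k \<le> n - 1"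
  shows "(\<forall>w\<in>permutations_of_set {1..n}.
            k_zigzagging k (nths w (k_peaks k w \<union> k_valleys k w)) \<and>
            length (nths w (k_peaks k w \<union> k_valleys k w)) = zs k w \<and>
            zs k w = card (k_peaks k w) + card (k_valleys k w))
       \<and> E_zs n k = 2 / fact n * (\<Sum>w\<in>permutations_of_set {1..n}. real (card (k_peaks k w)))"
proof -
  let ?S = "permutations_of_set {1..n}"
  have k: "0 < k" using assms(2) by simp
  have zs_w: "zs k w = card (k_peaks k w \<union> k_valleys k w)" if w: "w \<in> ?S" for w
  proof -
    obtain a b where "a < length w" "b < length w" "w!a + k \<le> w!b"
      using permutation_has_k_rise[OF w _ assms(3)] assms(1) by auto
    then show ?thesis by (rule zs_eq_card_k_extrema[OF permutations_of_setD(2)[OF w] k])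
  qed
  have "(\<Sum>w\<in>?S. real (zs k w))
      = (\<Sum>w\<in>?S. real (card (k_peaks k w)) + real (card (k_valleys k w)))"
    by (rule sum.cong) (simp_all add: zs_w card_k_extrema[OF k])
  also have "\<dots> = 2 * (\<Sum>w\<in>?S. real (card (k_peaks k w)))"
    using sum_card_k_valleys_eq_sum_card_k_peaks[of k n]
    by (simp add: sum.distrib flip: of_nat_sum)
  finally show ?thesis
    using k_zigzagging_k_extrema[OF permutations_of_setD(2) k] length_nths_k_extrema zs_w
      card_k_extrema[OF k]
    unfolding E_zs_def by simp
qed

end
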